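(* Let $k$ be an algebraically closed field and let $A=kQ/I$ be a gentle algebra. Then the (nonzero) maximal paths in $(Q,I)$ form a $k$-basis of $\mathrm{soc}_{A^e}A$, the socle of $A$ as a module over its enveloping algebra $A^e=A\otimes_k A^{op}$ (i.e. as an $A$-$A$-bimodule).
   Context: $Q$ is a finite connected quiver, $I$ an admissible ideal, paths composed left to right. A path is in $(Q,I)$ if it is not in $I$; it is maximal if for every arrow $\alpha$, $\alpha p\in I$ and $p\alpha\in I$. Gentle means: each vertex is the start of at most two arrows and the end of at most two arrows; for each arrow $\alpha$ at most one arrow $\beta$ with $\alpha\beta\notin I$ and at most one $\gamma$ with $\gamma\alpha\notin I$; $I$ is generated by paths of length 2; for each arrow $\alpha$ at most one arrow $\delta$ with $\alpha\delta\in I$ and at most one $\varepsilon$ with $\varepsilon\alpha\in I$. *)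

theory Defs
  imports "HOL-Computational_Algebra.Polynomial"
begin

text \<open>A path is a pair (v, as): a start vertex v and a list of arrows as, composed left to right;
  the trivial path at v is (v, []).\<close>

type_synonym ('v, 'a) qpath = "'v \<times> 'a list"

definition quiver :: "'v set \<Rightarrow> 'a set \<Rightarrow> ('a \<Rightarrow> 'v) \<Rightarrow> ('a \<Rightarrow> 'v) \<Rightarrow> bool" where
  "quiver V E s t \<longleftrightarrow> (\<forall>\<alpha>\<in>E. s \<alpha> \<in> V \<and> t \<alpha> \<in> V)"

definition finite_connected_quiver :: "'v set \<Rightarrow> 'a set \<Rightarrow> ('a \<Rightarrow> 'v) \<Rightarrow> ('a \<Rightarrow> 'v) \<Rightarrow> bool" where
  "finite_connected_quiver V E s t \<longleftrightarrow> quiver V E s t \<and> finite V \<and> finite E \<and> V \<noteq> {} \<and>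
     (\<forall>u\<in>V. \<forall>v\<in>V. (u, v) \<in> (\<Union>\<alpha>\<in>E. {(s \<alpha>, t \<alpha>), (t \<alpha>, s \<alpha>)})\<^sup>*)"

definition valid_path :: "'v set \<Rightarrow> 'a set \<Rightarrow> ('a \<Rightarrow> 'v) \<Rightarrow> ('a \<Rightarrow> 'v) \<Rightarrow> ('v, 'a) qpath \<Rightarrow> bool" where
  "valid_path V E s t p \<longleftrightarrow> fst p \<in> V \<and> set (snd p) \<subseteq> E \<and>
     (snd p \<noteq> [] \<longrightarrow> s (hd (snd p)) = fst p) \<and>
     (\<forall>i. Suc i < length (snd p) \<longrightarrow> t (snd p ! i) = s (snd p ! Suc i))"

definition ptarget :: "('a \<Rightarrow> 'v) \<Rightarrow> ('v, 'a) qpath \<Rightarrow> 'v" where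
  "ptarget t p = (if snd p = [] then fst p else t (last (snd p)))"

definition arrow_path :: "('a \<Rightarrow> 'v) \<Rightarrow> 'a \<Rightarrow> ('v, 'a) qpath" where
  "arrow_path s \<alpha> = (s \<alpha>, [\<alpha>])"

text \<open>Path algebra kQ: finitely supported k-valued functions on the paths of Q.\<close>

definition pathalg :: "'v set \<Rightarrow> 'a set \<Rightarrow> ('a \<Rightarrow> 'v) \<Rightarrow> ('a \<Rightarrow> 'v) \<Rightarrow> (('v, 'a) qpath \<Rightarrow> 'k::field) set" where
  "pathalg V E s t = {f. finite {p. f p \<noteq> 0} \<and> (\<forall>p. f p \<noteq> 0 \<longrightarrow> valid_path V E s t p)}"

definition delta :: "('v, 'a) qpath \<Rightarrow> ('v, 'a) qpath \<Rightarrow> 'k::field" where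
  "delta p = (\<lambda>r. if r = p then 1 else 0)"

definition pmult :: "('a \<Rightarrow> 'v) \<Rightarrow> (('v, 'a) qpath \<Rightarrow> 'k::field) \<Rightarrow> (('v, 'a) qpath \<Rightarrow> 'k) \<Rightarrow> ('v, 'a) qpath \<Rightarrow> 'k" where
  "pmult t f g = (\<lambda>r. \<Sum>(p, q) \<in> {(p, q). f p \<noteq> 0 \<and> g q \<noteq> 0 \<and> ptarget t p = fst q \<and> (fst p, snd p @ snd q) = r}.
                        f p * g q)"

definition is_ideal :: "'v set \<Rightarrow> 'a set \<Rightarrow> ('a \<Rightarrow> 'v) \<Rightarrow> ('a \<Rightarrow> 'v) \<Rightarrow> (('v, 'a) qpath \<Rightarrow> 'k::field) set \<Rightarrow> bool" where
  "is_ideal V E s t J \<longleftrightarrow> J \<subseteq> pathalg V E s t \<and> (\<lambda>_. 0) \<in> J \<and>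
     (\<forall>f\<in>J. \<forall>g\<in>J. (\<lambda>r. f r + g r) \<in> J) \<and>
     (\<forall>c. \<forall>f\<in>J. (\<lambda>r. c * f r) \<in> J) \<and>
     (\<forall>f\<in>J. \<forall>g\<in>pathalg V E s t. pmult t g f \<in> J \<and> pmult t f g \<in> J)"

definition gen_ideal :: "'v set \<Rightarrow> 'a set \<Rightarrow> ('a \<Rightarrow> 'v) \<Rightarrow> ('a \<Rightarrow> 'v) \<Rightarrow> ('v, 'a) qpath set \<Rightarrow> (('v, 'a) qpath \<Rightarrow> 'k::field) set" where
  "gen_ideal V E s t R = \<Inter> {J. is_ideal V E s t J \<and> (\<forall>p\<in>R. delta p \<in> J)}"

text \<open>Admissibility for an ideal generated by paths of length 2 (automatically contained in
  the square of the arrow ideal): some power R_Q^m of the arrow ideal lies in I, i.e. all paths of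
  length at least m lie in I.\<close>

definition admissible :: "'v set \<Rightarrow> 'a set \<Rightarrow> ('a \<Rightarrow> 'v) \<Rightarrow> ('a \<Rightarrow> 'v) \<Rightarrow> (('v, 'a) qpath \<Rightarrow> 'k::field) set \<Rightarrow> bool" where
  "admissible V E s t I \<longleftrightarrow> is_ideal V E s t I \<and>
     (\<forall>f\<in>I. \<forall>p. f p \<noteq> 0 \<longrightarrow> length (snd p) \<ge> 2) \<and>
     (\<exists>m\<ge>2. \<forall>p. valid_path V E s t p \<and> length (snd p) \<ge> m \<longrightarrow> delta p \<in> I)"

definition gentle :: "'v set \<Rightarrow> 'a set \<Rightarrow> ('a \<Rightarrow> 'v) \<Rightarrow> ('a \<Rightarrow> 'v) \<Rightarrow> ('v, 'a) qpath set \<Rightarrow> (('v, 'a) qpath \<Rightarrow> 'k::field) set \<Rightarrow> bool" where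
  "gentle V E s t R I \<longleftrightarrow>
     (let ap = (\<lambda>\<alpha> \<beta>. pmult t (delta (arrow_path s \<alpha>)) (delta (arrow_path s \<beta>)) :: ('v, 'a) qpath \<Rightarrow> 'k) in
     I = gen_ideal V E s t R \<and> admissible V E s t I \<and>
     (\<forall>p\<in>R. valid_path V E s t p \<and> length (snd p) = 2) \<and>
     (\<forall>v\<in>V. card {\<alpha>\<in>E. s \<alpha> = v} \<le> 2 \<and> card {\<alpha>\<in>E. t \<alpha> = v} \<le> 2) \<and>
     (\<forall>\<alpha>\<in>E. \<forall>\<beta>\<in>E. \<forall>\<beta>'\<in>E. ap \<alpha> \<beta> \<notin> I \<and> ap \<alpha> \<beta>' \<notin> I \<longrightarrow> \<beta> = \<beta>') \<and>
     (\<forall>\<alpha>\<in>E. \<forall>\<gamma>\<in>E. \<forall>\<gamma>'\<in>E. ap \<gamma> \<alpha> \<notin> I \<and> ap \<gamma>' \<alpha> \<notin> I \<longrightarrow> \<gamma> = \<gamma>') \<and>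
     (\<forall>\<alpha>\<in>E. \<forall>\<delta>\<in>E. \<forall>\<delta>'\<in>E. t \<alpha> = s \<delta> \<and> t \<alpha> = s \<delta>' \<and> ap \<alpha> \<delta> \<in> I \<and> ap \<alpha> \<delta>' \<in> I \<longrightarrow> \<delta> = \<delta>') \<and>
     (\<forall>\<alpha>\<in>E. \<forall>\<epsilon>\<in>E. \<forall>\<epsilon>'\<in>E. t \<epsilon> = s \<alpha> \<and> t \<epsilon>' = s \<alpha> \<and> ap \<epsilon> \<alpha> \<in> I \<and> ap \<epsilon>' \<alpha> \<in> I \<longrightarrow> \<epsilon> = \<epsilon>'))"

definition maximal_paths :: "'v set \<Rightarrow> 'a set \<Rightarrow> ('a \<Rightarrow> 'v) \<Rightarrow> ('a \<Rightarrow> 'v) \<Rightarrow> (('v, 'a) qpath \<Rightarrow> 'k::field) set \<Rightarrow> ('v, 'a) qpath set" where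
  "maximal_paths V E s t I = {p. valid_path V E s t p \<and> delta p \<notin> I \<and>
     (\<forall>\<alpha>\<in>E. pmult t (delta (arrow_path s \<alpha>)) (delta p) \<in> I \<and> pmult t (delta p) (delta (arrow_path s \<alpha>)) \<in> I)}"

text \<open>Sub-bimodules of A = kQ/I are the ideals J/I with I \<subseteq> J.  A simple sub-bimodule
  corresponds to an ideal J minimal among ideals strictly containing I; the socle
  soc_{A^e} A (sum of simple sub-bimodules) corresponds to the preimage below.\<close>

definition minimal_over :: "'v set \<Rightarrow> 'a set \<Rightarrow> ('a \<Rightarrow> 'v) \<Rightarrow> ('a \<Rightarrow> 'v) \<Rightarrow> (('v, 'a) qpath \<Rightarrow> 'k::field) set \<Rightarrow> (('v, 'a) qpath \<Rightarrow> 'k) set \<Rightarrow> bool" where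
  "minimal_over V E s t I J \<longleftrightarrow> is_ideal V E s t J \<and> I \<subset> J \<and>
     (\<forall>K. is_ideal V E s t K \<and> I \<subseteq> K \<and> K \<subseteq> J \<longrightarrow> K = I \<or> K = J)"

definition socle_preimage :: "'v set \<Rightarrow> 'a set \<Rightarrow> ('a \<Rightarrow> 'v) \<Rightarrow> ('a \<Rightarrow> 'v) \<Rightarrow> (('v, 'a) qpath \<Rightarrow> 'k::field) set \<Rightarrow> (('v, 'a) qpath \<Rightarrow> 'k) set" where
  "socle_preimage V E s t I = \<Inter> {K. is_ideal V E s t K \<and> I \<subseteq> K \<and> (\<forall>J. minimal_over V E s t I J \<longrightarrow> J \<subseteq> K)}"

definition alg_closed :: "'k::field itself \<Rightarrow> bool" where
  "alg_closed _ \<longleftrightarrow> (\<forall>p :: 'k poly. degree p \<ge> 1 \<longrightarrow> (\<exists>x. poly p x = 0))"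

end

theory Submission
  imports Defs
begin

text \<open>Only two properties of the gentle ideal \<open>I\<close> are used: it is spanned by the paths it
  contains, and it contains all paths of some length \<open>m\<close>.

  For a maximal path \<open>p\<close>, the span of \<open>I\<close> and \<open>p\<close>
  is an ideal, and it is minimal over \<open>I\<close>, since any of its elements outside \<open>I\<close> has a nonzero
  \<open>p\<close>-coefficient. Conversely, let \<open>J\<close> be minimal over \<open>I\<close>. By minimality each \<open>J \<inter> (I + R\<^sup>N)\<close>
  is \<open>I\<close> or \<open>J\<close>, and as \<open>I + R\<^sup>m = I\<close> there is an \<open>N\<close> with \<open>J \<subseteq> I + R\<^sup>N\<close> but
  \<open>J \<inter> (I + R\<^sup>N\<^sup>+\<^sup>1) = I\<close>. Multiplying an element of \<open>J\<close> by an arrow on either side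
  therefore lands in \<open>I\<close>, so, \<open>I\<close> being monomial, every path in its support outside \<open>I\<close>
  is maximal. Hence the socle is \<open>I\<close> plus the span of the maximal paths, which are linearly
  independent modulo the monomial ideal \<open>I\<close>.\<close>

abbreviation pcat :: "('v, 'a) qpath \<Rightarrow> ('v, 'a) qpath \<Rightarrow> ('v, 'a) qpath" where
  "pcat p q \<equiv> (fst p, snd p @ snd q)"

lemma valid_path_Nil [simp]: "valid_path V E s t (v, []) \<longleftrightarrow> v \<in> V"
  by (simp add: valid_path_def)

lemma valid_path_Cons:
  assumes "quiver V E s t"
  shows "valid_path V E s t (v, a # as) \<longleftrightarrow> v \<in> V \<and> a \<in> E \<and> s a = v \<and> valid_path V E s t (t a, as)"
  using assms unfolding valid_path_def quiver_def
  by (cases as) (auto simp: All_less_Suc2 nth_Cons' split: if_splits)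

lemma valid_path_append:
  assumes "quiver V E s t"
  shows "valid_path V E s t (v, xs @ ys) \<longleftrightarrow>
    valid_path V E s t (v, xs) \<and> valid_path V E s t (ptarget t (v, xs), ys)"
proof (induction xs arbitrary: v)
  case Nil
  then show ?case by (auto simp: ptarget_def valid_path_def)
next
  case (Cons a xs)
  then show ?case by (auto simp: valid_path_Cons[OF assms] ptarget_def)
qed

lemma valid_path_pcat:
  assumes "quiver V E s t" and "ptarget t p = fst q"
  shows "valid_path V E s t (pcat p q) \<longleftrightarrow> valid_path V E s t p \<and> valid_path V E s t q"
  using valid_path_append[OF assms(1), of "fst p" "snd p" "snd q"] assms(2) by simp

lemma valid_arrow_path:
  assumes "quiver V E s t" and "a \<in> E"
  shows "valid_path V E s t (arrow_path s a)"
  using assms by (simp add: arrow_path_def valid_path_Cons quiver_def)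

lemma ptarget_snoc [simp]: "ptarget t (v, xs @ [a]) = t a"
  by (simp add: ptarget_def)

lemma ptarget_arrow_path [simp]: "ptarget t (arrow_path s a) = t a"
  by (simp add: arrow_path_def ptarget_def)

lemma pmult_nonzeroE:
  assumes "pmult t f g r \<noteq> 0"
  obtains p q where "f p \<noteq> 0" "g q \<noteq> 0" "ptarget t p = fst q" "r = pcat p q"
proof -
  have "{(p, q). f p \<noteq> 0 \<and> g q \<noteq> 0 \<and> ptarget t p = fst q \<and> pcat p q = r} \<noteq> {}"
    using assms unfolding pmult_def by force
  then show thesis using that by auto
qed

lemma pmult_delta_left_apply:
  assumes "ptarget t a = fst q"
  shows "pmult t (delta a) g (pcat a q) = (g q :: 'k::field)"
proof -
  have "{(p, q'). delta a p \<noteq> (0::'k) \<and> g q' \<noteq> 0 \<and> ptarget t p = fst q' \<and> pcat p q' = pcat a q}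
      = (if g q = 0 then {} else {(a, q)})" (is "_ = ?S")
    using assms by (auto simp: delta_def prod_eq_iff split: if_splits)
  then have "pmult t (delta a) g (pcat a q) = (\<Sum>(p, q')\<in>?S. delta a p * g q')"
    unfolding pmult_def by (rule arg_cong)
  then show ?thesis by (simp add: delta_def)
qed

lemma pmult_delta_right_apply:
  assumes "ptarget t p = fst b"
  shows "pmult t g (delta b) (pcat p b) = (g p :: 'k::field)"
proof -
  have "{(p', b'). g p' \<noteq> (0::'k) \<and> delta b b' \<noteq> 0 \<and> ptarget t p' = fst b' \<and> pcat p' b' = pcat p b}
      = (if g p = 0 then {} else {(p, b)})" (is "_ = ?S")
    using assms by (auto simp: delta_def prod_eq_iff split: if_splits)
  then have "pmult t g (delta b) (pcat p b) = (\<Sum>(p', b')\<in>?S. g p' * delta b b')"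
    unfolding pmult_def by (rule arg_cong)
  then show ?thesis by (simp add: delta_def)
qed

lemma pmult_delta_delta:
  "pmult t (delta p) (delta q) = (if ptarget t p = fst q then delta (pcat p q) else (\<lambda>_. 0::'k::field))"
proof
  fix r
  have "{(p', q'). delta p p' \<noteq> (0::'k) \<and> delta q q' \<noteq> (0::'k) \<and> ptarget t p' = fst q' \<and> pcat p' q' = r}
      = (if ptarget t p = fst q \<and> r = pcat p q then {(p, q)} else {})" (is "_ = ?S")
    by (auto simp: delta_def split: if_splits)
  then have "pmult t (delta p) (delta q) r = (\<Sum>(p', q')\<in>?S. delta p p' * (delta q q' :: 'k))"
    unfolding pmult_def by (rule arg_cong)
  then show "pmult t (delta p) (delta q) r = (if ptarget t p = fst q then delta (pcat p q) else (\<lambda>_. 0::'k)) r"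
    by (auto simp: delta_def)
qed

definition path_span :: "'v set \<Rightarrow> 'a set \<Rightarrow> ('a \<Rightarrow> 'v) \<Rightarrow> ('a \<Rightarrow> 'v) \<Rightarrow>
    (('v, 'a) qpath \<Rightarrow> bool) \<Rightarrow> (('v, 'a) qpath \<Rightarrow> 'k::field) set" where
  "path_span V E s t P = {f \<in> pathalg V E s t. \<forall>p. f p \<noteq> 0 \<longrightarrow> P p}"

lemma path_span_True: "path_span V E s t (\<lambda>_. True) = pathalg V E s t"
  by (simp add: path_span_def)

lemma path_spanI:
  "finite {p. f p \<noteq> 0} \<Longrightarrow> (\<And>p. f p \<noteq> 0 \<Longrightarrow> valid_path V E s t p \<and> P p) \<Longrightarrow> f \<in> path_span V E s t P"
  by (auto simp: path_span_def pathalg_def)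

lemma path_spanD:
  assumes "f \<in> path_span V E s t P"
  shows "finite {p. f p \<noteq> 0}" and "f p \<noteq> 0 \<Longrightarrow> valid_path V E s t p" and "f p \<noteq> 0 \<Longrightarrow> P p"
  using assms unfolding path_span_def pathalg_def by blast+

lemma path_span_mono: "(\<And>p. P p \<Longrightarrow> Q p) \<Longrightarrow> path_span V E s t P \<subseteq> path_span V E s t Q"
  by (auto simp: path_span_def)

lemma delta_in_path_span: "valid_path V E s t p \<Longrightarrow> P p \<Longrightarrow> delta p \<in> path_span V E s t P"
  by (rule path_spanI) (auto simp: delta_def split: if_splits)

lemma delta_in_pathalg: "valid_path V E s t p \<Longrightarrow> delta p \<in> pathalg V E s t"
  using delta_in_path_span[of V E s t p "\<lambda>_. True"] by (simp add: path_span_True)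

lemma pmult_in_path_span:
  assumes q: "quiver V E s t" and f: "f \<in> path_span V E s t P" and g: "g \<in> path_span V E s t Q"
    and PQ: "\<And>p q. valid_path V E s t p \<Longrightarrow> valid_path V E s t q \<Longrightarrow> ptarget t p = fst q \<Longrightarrow>
      P p \<Longrightarrow> Q q \<Longrightarrow> P' (pcat p q)"
  shows "pmult t f g \<in> path_span V E s t P'"
proof (rule path_spanI)
  have "{r. pmult t f g r \<noteq> 0} \<subseteq> (\<lambda>(p, q). pcat p q) ` ({p. f p \<noteq> 0} \<times> {q. g q \<noteq> 0})"
  proof
    fix r assume "r \<in> {r. pmult t f g r \<noteq> 0}"
    then obtain p q where "f p \<noteq> 0" "g q \<noteq> 0" "r = pcat p q"
      by (auto elim: pmult_nonzeroE)
    then show "r \<in> (\<lambda>(p, q). pcat p q) ` ({p. f p \<noteq> 0} \<times> {q. g q \<noteq> 0})"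
      by (intro image_eqI[of _ _ "(p, q)"]) auto
  qed
  then show "finite {r. pmult t f g r \<noteq> 0}"
    using path_spanD(1)[OF f] path_spanD(1)[OF g] by (auto intro: finite_subset)
next
  fix r assume "pmult t f g r \<noteq> 0"
  then obtain p q where pq: "f p \<noteq> 0" "g q \<noteq> 0" "ptarget t p = fst q" and r: "r = pcat p q"
    by (rule pmult_nonzeroE)
  have "valid_path V E s t p" "P p" "valid_path V E s t q" "Q q"
    using path_spanD(2,3)[OF f pq(1)] path_spanD(2,3)[OF g pq(2)] by auto
  then show "valid_path V E s t r \<and> P' r"
    unfolding r using PQ pq(3) valid_path_pcat[OF q pq(3)] by blast
qed

lemma is_idealD:
  assumes "is_ideal V E s t K"
  shows "K \<subseteq> pathalg V E s t" and "(\<lambda>_. 0) \<in> K"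
    and "f \<in> K \<Longrightarrow> g \<in> K \<Longrightarrow> (\<lambda>r. f r + g r) \<in> K"
    and "f \<in> K \<Longrightarrow> (\<lambda>r. c * f r) \<in> K"
    and "f \<in> K \<Longrightarrow> g \<in> pathalg V E s t \<Longrightarrow> pmult t g f \<in> K"
    and "f \<in> K \<Longrightarrow> g \<in> pathalg V E s t \<Longrightarrow> pmult t f g \<in> K"
  using assms unfolding is_ideal_def by blast+

lemma is_ideal_Int:
  assumes K: "is_ideal V E s t K" and L: "is_ideal V E s t L"
  shows "is_ideal V E s t (K \<inter> L)"
  unfolding is_ideal_def
  using is_idealD[OF K] is_idealD[OF L] by (simp add: Int_iff le_infI1)

lemma ideal_diff:
  assumes "is_ideal V E s t K" "f \<in> K" "g \<in> K"
  shows "(\<lambda>r. f r - g r) \<in> K"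
  using is_idealD(3)[OF assms(1,2) is_idealD(4)[OF assms(1,3), of "-1"]] by simp

lemma ideal_sum:
  assumes K: "is_ideal V E s t K" and "finite F" and "\<And>p. p \<in> F \<Longrightarrow> f p \<in> K"
  shows "(\<lambda>r. \<Sum>p\<in>F. c p * f p r) \<in> K"
  using assms(2,3)
proof (induction F rule: finite_induct)
  case empty
  then show ?case using is_idealD(2)[OF K] by simp
next
  case (insert x F)
  then show ?case using is_idealD(3,4)[OF K] by simp
qed

lemma sum_delta_apply: "finite F \<Longrightarrow> (\<Sum>p\<in>F. c p * (delta p r :: 'k::field)) = (if r \<in> F then c r else 0)"
  by (simp add: delta_def if_distrib[where f = "\<lambda>x. _ * x"] sum.delta' cong: if_cong)

lemma path_span_subset_ideal:
  fixes K :: "(('v, 'a) qpath \<Rightarrow> 'k::field) set"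
  assumes K: "is_ideal V E s t K" and deltas: "\<And>p. valid_path V E s t p \<Longrightarrow> P p \<Longrightarrow> delta p \<in> K"
  shows "path_span V E s t P \<subseteq> K"
proof
  fix f :: "_ \<Rightarrow> 'k" assume f: "f \<in> path_span V E s t P"
  have "f = (\<lambda>r. \<Sum>p\<in>{p. f p \<noteq> 0}. f p * delta p r)"
    using sum_delta_apply[OF path_spanD(1)[OF f], of f] by auto
  also have "\<dots> \<in> K"
    using path_spanD[OF f] by (intro ideal_sum[OF K] deltas) auto
  finally show "f \<in> K" .
qed

lemma is_ideal_path_span:
  assumes q: "quiver V E s t"
    and closed: "\<And>p q. valid_path V E s t p \<Longrightarrow> valid_path V E s t q \<Longrightarrow> ptarget t p = fst q \<Longrightarrow>
      P p \<or> P q \<Longrightarrow> P (pcat p q)"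
  shows "is_ideal V E s t (path_span V E s t P :: (_ \<Rightarrow> 'k::field) set)"
proof -
  have "pmult t g f \<in> path_span V E s t P \<and> pmult t f g \<in> path_span V E s t P"
    if "f \<in> path_span V E s t P" "g \<in> pathalg V E s t" for f g :: "_ \<Rightarrow> 'k"
    using that closed unfolding path_span_True[symmetric]
    by (blast intro: pmult_in_path_span[OF q])
  moreover have "(\<lambda>r. f r + g r) \<in> path_span V E s t P"
    if "f \<in> path_span V E s t P" "g \<in> path_span V E s t P" for f g :: "_ \<Rightarrow> 'k"
  proof (rule path_spanI)
    show "finite {r. f r + g r \<noteq> 0}"
      using path_spanD(1)[OF that(1)] path_spanD(1)[OF that(2)]
      by (auto intro: finite_subset[of _ "{r. f r \<noteq> 0} \<union> {r. g r \<noteq> 0}"])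
  next
    fix p assume "f p + g p \<noteq> 0"
    then have "f p \<noteq> 0 \<or> g p \<noteq> 0" by auto
    then show "valid_path V E s t p \<and> P p"
      using path_spanD(2,3)[OF that(1)] path_spanD(2,3)[OF that(2)] by blast
  qed
  moreover have "(\<lambda>r. c * f r) \<in> path_span V E s t P" if "f \<in> path_span V E s t P" for c and f :: "_ \<Rightarrow> 'k"
    using path_spanD[OF that] by (intro path_spanI) (auto intro: finite_subset[of _ "{r. f r \<noteq> 0}"])
  moreover have "path_span V E s t P \<subseteq> pathalg V E s t"
    using path_span_mono[of P "\<lambda>_. True"] by (simp add: path_span_True)
  moreover have "(\<lambda>_. 0) \<in> path_span V E s t P"
    by (rule path_spanI) simp_all
  ultimately show ?thesis
    unfolding is_ideal_def by blast
qed

lemma delta_pcat_in_ideal: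
  assumes "is_ideal V E s t K" and "valid_path V E s t p" "valid_path V E s t q" "ptarget t p = fst q"
    and "delta p \<in> K \<or> delta q \<in> K"
  shows "delta (pcat p q) \<in> K"
proof -
  have "pmult t (delta p) (delta q) \<in> K"
    using assms(5) is_idealD(5,6)[OF assms(1)] delta_in_pathalg assms(2,3) by blast
  then show ?thesis using assms(4) by (simp add: pmult_delta_delta)
qed

lemma gen_ideal_paths_monomial:
  assumes q: "quiver V E s t" and I: "is_ideal V E s t I" and gen: "I = gen_ideal V E s t R"
    and R: "\<And>p. p \<in> R \<Longrightarrow> valid_path V E s t p"
    and f: "f \<in> I" "f p \<noteq> 0"
  shows "delta p \<in> I"
proof -
  have "is_ideal V E s t (path_span V E s t (\<lambda>p. delta p \<in> I))"
    by (rule is_ideal_path_span[OF q]) (rule delta_pcat_in_ideal[OF I])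
  moreover have "delta p \<in> path_span V E s t (\<lambda>p. delta p \<in> I)" if "p \<in> R" for p
    using that R gen by (intro delta_in_path_span) (auto simp: gen_ideal_def)
  ultimately have "gen_ideal V E s t R \<subseteq> path_span V E s t (\<lambda>p. delta p \<in> I)"
    unfolding gen_ideal_def by blast
  then have "I \<subseteq> path_span V E s t (\<lambda>p. delta p \<in> I)"
    using gen by simp
  then show ?thesis using f path_spanD(3) by blast
qed

locale bounded_monomial_ideal =
  fixes V :: "'v set" and E :: "'a set" and s t :: "'a \<Rightarrow> 'v"
    and I :: "(('v, 'a) qpath \<Rightarrow> 'k::field) set"
  assumes quiver: "quiver V E s t"
    and ideal: "is_ideal V E s t I"
    and monomial: "f \<in> I \<Longrightarrow> f p \<noteq> 0 \<Longrightarrow> delta p \<in> I"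
    and long_paths: "\<exists>m. \<forall>p. valid_path V E s t p \<and> m \<le> length (snd p) \<longrightarrow> delta p \<in> I"
begin

lemma ideal_eq_path_span: "I = path_span V E s t (\<lambda>p. delta p \<in> I)"
proof
  show "I \<subseteq> path_span V E s t (\<lambda>p. delta p \<in> I)"
    using is_idealD(1)[OF ideal] monomial by (auto simp: path_span_def pathalg_def)
qed (rule path_span_subset_ideal[OF ideal])

lemma pcat_maximal_left:
  assumes p: "p \<in> maximal_paths V E s t I"
    and r: "valid_path V E s t r" "ptarget t r = fst p"
  shows "pcat r p = p \<or> delta (pcat r p) \<in> I"
proof (cases "snd r" rule: rev_cases)
  case Nil
  then show ?thesis using r(2) by (simp add: ptarget_def prod_eq_iff)
next
  case (snoc xs a)
  let ?r' = "(fst r, xs)"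
  have "valid_path V E s t ?r'" "valid_path V E s t (ptarget t ?r', [a])"
    using r(1) snoc valid_path_append[OF quiver, of "fst r" xs "[a]"] by (metis prod.collapse)+
  then have r': "valid_path V E s t ?r'" "ptarget t ?r' = s a" "a \<in> E"
    by (auto simp: valid_path_Cons[OF quiver])
  have ta: "t a = fst p" using r(2) snoc by (simp add: ptarget_def)
  have "pmult t (delta (arrow_path s a)) (delta p) \<in> I"
    using p r'(3) by (simp add: maximal_paths_def)
  then have "delta (pcat (arrow_path s a) p) \<in> I"
    using ta by (simp add: pmult_delta_delta)
  moreover have ap: "valid_path V E s t (pcat (arrow_path s a) p)"
    using valid_path_pcat[OF quiver, of "arrow_path s a" p] valid_arrow_path[OF quiver r'(3)] p ta
    by (simp add: maximal_paths_def)
  ultimately have "delta (pcat ?r' (pcat (arrow_path s a) p)) \<in> I"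
    using delta_pcat_in_ideal[OF ideal r'(1) ap] r'(2) by (simp add: arrow_path_def)
  then show ?thesis using snoc by (simp add: arrow_path_def)
qed

lemma pcat_maximal_right:
  assumes p: "p \<in> maximal_paths V E s t I"
    and r: "valid_path V E s t r" "ptarget t p = fst r"
  shows "pcat p r = p \<or> delta (pcat p r) \<in> I"
proof (cases "snd r")
  case Nil
  then show ?thesis by simp
next
  case (Cons a ys)
  then have a: "a \<in> E" "s a = fst r" and ys: "valid_path V E s t (t a, ys)"
    using r(1) valid_path_Cons[OF quiver, of "fst r" a ys] by (metis prod.collapse)+
  have "pmult t (delta p) (delta (arrow_path s a)) \<in> I"
    using p a(1) by (simp add: maximal_paths_def)
  then have "delta (pcat p (arrow_path s a)) \<in> I"
    using a r(2) by (simp add: pmult_delta_delta arrow_path_def)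
  moreover have pa: "valid_path V E s t (pcat p (arrow_path s a))"
    using valid_path_pcat[OF quiver, of p "arrow_path s a"] valid_arrow_path[OF quiver a(1)] p a r(2)
    by (simp add: maximal_paths_def arrow_path_def)
  ultimately have "delta (pcat (pcat p (arrow_path s a)) (t a, ys)) \<in> I"
    using delta_pcat_in_ideal[OF ideal pa ys] a r(2) by (simp add: arrow_path_def)
  then show ?thesis using Cons by (simp add: arrow_path_def)
qed

lemma maximal_paths_independent:
  assumes "F \<subseteq> maximal_paths V E s t I" "finite F" "(\<lambda>r. \<Sum>p\<in>F. c p * delta p r) \<in> I" "p \<in> F"
  shows "c p = 0"
proof (rule ccontr)
  assume "c p \<noteq> 0"
  then have "delta p \<in> I"
    using monomial[OF assms(3), of p] assms(2,4) by (simp add: sum_delta_apply)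
  then show False using assms(1,4) by (auto simp: maximal_paths_def)
qed

definition socle_span :: "(('v, 'a) qpath \<Rightarrow> 'k) set" where
  "socle_span = path_span V E s t (\<lambda>p. delta p \<in> I \<or> p \<in> maximal_paths V E s t I)"

lemma is_ideal_socle_span: "is_ideal V E s t socle_span"
  unfolding socle_span_def
proof (rule is_ideal_path_span[OF quiver])
  fix p q assume pq: "valid_path V E s t p" "valid_path V E s t q" "ptarget t p = fst q"
    and "(delta p \<in> I \<or> p \<in> maximal_paths V E s t I) \<or> (delta q \<in> I \<or> q \<in> maximal_paths V E s t I)"
  then consider "delta p \<in> I \<or> delta q \<in> I" | "p \<in> maximal_paths V E s t I" | "q \<in> maximal_paths V E s t I"
    by blast
  then show "delta (pcat p q) \<in> I \<or> pcat p q \<in> maximal_paths V E s t I"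
  proof cases
    case 1
    then show ?thesis using delta_pcat_in_ideal[OF ideal pq] by blast
  next
    case 2
    then show ?thesis using pcat_maximal_right[OF 2 pq(2,3)] by auto
  next
    case 3
    then show ?thesis using pcat_maximal_left[OF 3 pq(1,3)] by auto
  qed
qed

lemma ideal_subset_socle_span: "I \<subseteq> socle_span"
  unfolding socle_span_def by (subst (1) ideal_eq_path_span) (rule path_span_mono, blast)

lemma socle_span_eq:
  "socle_span = {(\<lambda>r. x r + (\<Sum>p\<in>F. c p * delta p r)) | x F c.
     x \<in> I \<and> F \<subseteq> maximal_paths V E s t I \<and> finite F}" (is "_ = ?sums")
proof
  show "?sums \<subseteq> socle_span"
  proof
    fix f assume "f \<in> ?sums"
    then obtain x F c where f: "f = (\<lambda>r. x r + (\<Sum>p\<in>F. c p * delta p r))"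
      and x: "x \<in> I" and F: "F \<subseteq> maximal_paths V E s t I" "finite F" by blast
    have "(\<lambda>r. \<Sum>p\<in>F. c p * delta p r) \<in> socle_span"
      using F by (intro ideal_sum[OF is_ideal_socle_span]) (auto simp: socle_span_def maximal_paths_def
        intro: delta_in_path_span)
    then show "f \<in> socle_span"
      unfolding f using x ideal_subset_socle_span is_idealD(3)[OF is_ideal_socle_span] by blast
  qed
next
  show "socle_span \<subseteq> ?sums"
  proof
    fix f assume f: "f \<in> socle_span"
    define F where "F = {p. f p \<noteq> 0 \<and> delta p \<notin> I}"
    define x where "x = (\<lambda>r. if delta r \<in> I then f r else 0)"
    have fin: "finite F"
      using path_spanD(1)[OF f[unfolded socle_span_def]] by (auto simp: F_def intro: finite_subset)
    have "F \<subseteq> maximal_paths V E s t I"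
      using path_spanD(3)[OF f[unfolded socle_span_def]] by (auto simp: F_def)
    moreover have "x \<in> I"
    proof (subst ideal_eq_path_span, rule path_spanI)
      show "finite {p. x p \<noteq> 0}"
        using path_spanD(1)[OF f[unfolded socle_span_def]] by (auto simp: x_def intro: finite_subset)
    qed (use path_spanD(2)[OF f[unfolded socle_span_def]] in \<open>auto simp: x_def split: if_splits\<close>)
    moreover have "f = (\<lambda>r. x r + (\<Sum>p\<in>F. f p * delta p r))"
      by (rule ext) (simp only: sum_delta_apply[OF fin], simp add: x_def F_def)
    ultimately show "f \<in> ?sums" using fin by blast
  qed
qed

lemma delta_in_ideal_of_coeff:
  assumes K: "is_ideal V E s t K" "I \<subseteq> K"
    and g: "g \<in> K" "g \<in> path_span V E s t (\<lambda>r. delta r \<in> I \<or> r = p)" "g p \<noteq> 0"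
  shows "delta p \<in> K"
proof -
  define g' where "g' = (\<lambda>r. if r = p then 0 else g r)"
  have "g' \<in> I"
  proof (subst ideal_eq_path_span, rule path_spanI)
    show "finite {r. g' r \<noteq> 0}"
      using path_spanD(1)[OF g(2)] by (auto simp: g'_def intro: finite_subset)
  qed (use path_spanD(2,3)[OF g(2)] in \<open>auto simp: g'_def split: if_splits\<close>)
  then have "(\<lambda>r. g r - g' r) \<in> K" using ideal_diff[OF K(1) g(1)] K(2) by blast
  then have "(\<lambda>r. inverse (g p) * (g r - g' r)) \<in> K" by (rule is_idealD(4)[OF K(1)])
  moreover have "(\<lambda>r. inverse (g p) * (g r - g' r)) = delta p"
    using g(3) by (auto simp: g'_def delta_def)
  ultimately show ?thesis by simp
qed

lemma minimal_over_maximal_path: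
  assumes p: "p \<in> maximal_paths V E s t I"
  shows "minimal_over V E s t I (path_span V E s t (\<lambda>r. delta r \<in> I \<or> r = p))"
    (is "minimal_over V E s t I ?J")
proof -
  have vp: "valid_path V E s t p" and pI: "delta p \<notin> I"
    using p by (auto simp: maximal_paths_def)
  have J: "is_ideal V E s t ?J"
  proof (rule is_ideal_path_span[OF quiver])
    fix q r assume qr: "valid_path V E s t q" "valid_path V E s t r" "ptarget t q = fst r"
      and "(delta q \<in> I \<or> q = p) \<or> (delta r \<in> I \<or> r = p)"
    then consider "delta q \<in> I \<or> delta r \<in> I" | "q = p" | "r = p" by blast
    then show "delta (pcat q r) \<in> I \<or> pcat q r = p"
    proof cases
      case 1
      then show ?thesis using delta_pcat_in_ideal[OF ideal qr] by blast
    next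
      case 2
      then show ?thesis using pcat_maximal_right[OF p, of r] qr by auto
    next
      case 3
      then show ?thesis using pcat_maximal_left[OF p, of q] qr by auto
    qed
  qed
  have IJ: "I \<subseteq> ?J"
    by (subst (1) ideal_eq_path_span) (rule path_span_mono, blast)
  moreover have "delta p \<in> ?J" using vp by (simp add: delta_in_path_span)
  moreover have "K = I \<or> K = ?J" if K: "is_ideal V E s t K" "I \<subseteq> K" "K \<subseteq> ?J" for K
  proof (cases "K = I")
    case False
    then obtain g where g: "g \<in> K" "g \<notin> I" using K(2) by blast
    have "g p \<noteq> 0"
    proof
      assume "g p = 0"
      then have "g \<in> path_span V E s t (\<lambda>r. delta r \<in> I)"
        using g(1) K(3) path_spanD[of g] by (intro path_spanI) blast+
      then show False using g(2) ideal_eq_path_span by blast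
    qed
    then have "delta p \<in> K" using delta_in_ideal_of_coeff[OF K(1,2) g(1)] g(1) K(3) by blast
    then have "?J \<subseteq> K" using K(1,2) by (intro path_span_subset_ideal) auto
    then show ?thesis using K(3) by blast
  qed simp
  ultimately show ?thesis unfolding minimal_over_def using J pI by blast
qed

lemma pmult_delta_left_in_ideal:
  assumes "pmult t (delta a) g \<in> I" "g r \<noteq> 0"
  shows "pmult t (delta a) (delta r) \<in> I"
proof (cases "ptarget t a = fst r")
  case True
  then have "delta (pcat a r) \<in> I"
    using monomial[OF assms(1)] pmult_delta_left_apply[OF True, of g] assms(2) by simp
  then show ?thesis using True by (simp add: pmult_delta_delta)
qed (use is_idealD(2)[OF ideal] in \<open>simp add: pmult_delta_delta\<close>)

lemma pmult_delta_right_in_ideal: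
  assumes "pmult t g (delta b) \<in> I" "g r \<noteq> 0"
  shows "pmult t (delta r) (delta b) \<in> I"
proof (cases "ptarget t r = fst b")
  case True
  then have "delta (pcat r b) \<in> I"
    using monomial[OF assms(1)] pmult_delta_right_apply[OF True, of g] assms(2) by simp
  then show ?thesis using True by (simp add: pmult_delta_delta)
qed (use is_idealD(2)[OF ideal] in \<open>simp add: pmult_delta_delta\<close>)

text \<open>\<open>rad_pow N\<close> is \<open>I + R\<^sub>Q\<^sup>N\<close>, the preimage of \<open>rad\<^sup>N A\<close>.\<close>

definition rad_pow :: "nat \<Rightarrow> (('v, 'a) qpath \<Rightarrow> 'k) set" where
  "rad_pow N = path_span V E s t (\<lambda>p. delta p \<in> I \<or> N \<le> length (snd p))"

lemma is_ideal_rad_pow: "is_ideal V E s t (rad_pow N)"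
  unfolding rad_pow_def
proof (rule is_ideal_path_span[OF quiver])
  fix p q assume pq: "valid_path V E s t p" "valid_path V E s t q" "ptarget t p = fst q"
    and "(delta p \<in> I \<or> N \<le> length (snd p)) \<or> (delta q \<in> I \<or> N \<le> length (snd q))"
  then show "delta (pcat p q) \<in> I \<or> N \<le> length (snd (pcat p q))"
    using delta_pcat_in_ideal[OF ideal pq] by auto
qed

lemma ideal_subset_rad_pow: "I \<subseteq> rad_pow N"
  unfolding rad_pow_def by (subst (1) ideal_eq_path_span) (rule path_span_mono, blast)

lemma rad_pow_0: "rad_pow 0 = pathalg V E s t"
  by (simp add: rad_pow_def path_span_True)

lemma rad_pow_subset_ideal: obtains m where "rad_pow m \<subseteq> I"
proof -
  obtain m where "\<forall>p. valid_path V E s t p \<and> m \<le> length (snd p) \<longrightarrow> delta p \<in> I"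
    using long_paths by blast
  then have "rad_pow m \<subseteq> I"
    unfolding rad_pow_def by (intro path_span_subset_ideal[OF ideal]) auto
  then show thesis by (rule that)
qed

lemma pmult_rad_pow: "f \<in> rad_pow M \<Longrightarrow> g \<in> rad_pow N \<Longrightarrow> pmult t f g \<in> rad_pow (M + N)"
  unfolding rad_pow_def
proof (rule pmult_in_path_span[OF quiver])
  fix p q assume pq: "valid_path V E s t p" "valid_path V E s t q" "ptarget t p = fst q"
    and "delta p \<in> I \<or> M \<le> length (snd p)" "delta q \<in> I \<or> N \<le> length (snd q)"
  then show "delta (pcat p q) \<in> I \<or> M + N \<le> length (snd (pcat p q))"
    using delta_pcat_in_ideal[OF ideal pq] by auto
qed

lemma delta_arrow_in_rad_pow_1: "a \<in> E \<Longrightarrow> delta (arrow_path s a) \<in> rad_pow 1"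
  unfolding rad_pow_def
  by (rule delta_in_path_span[OF valid_arrow_path[OF quiver]]) (simp_all add: arrow_path_def)

lemma minimal_over_rad_pow_step:
  assumes "minimal_over V E s t I J"
  obtains N where "J \<subseteq> rad_pow N" "J \<inter> rad_pow (Suc N) \<subseteq> I"
proof -
  have J: "is_ideal V E s t J" "I \<subset> J"
    and min: "\<And>K. is_ideal V E s t K \<Longrightarrow> I \<subseteq> K \<Longrightarrow> K \<subseteq> J \<Longrightarrow> K = I \<or> K = J"
    using assms unfolding minimal_over_def by blast+
  have dichotomy: "J \<subseteq> rad_pow N \<or> J \<inter> rad_pow N \<subseteq> I" for N
    using min[OF is_ideal_Int[OF J(1) is_ideal_rad_pow]] J(2) ideal_subset_rad_pow[of N] by blast
  obtain m where "rad_pow m \<subseteq> I" by (rule rad_pow_subset_ideal)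
  then have "\<not> J \<subseteq> rad_pow m" using J(2) by blast
  moreover have "J \<subseteq> rad_pow 0" using is_idealD(1)[OF J(1)] by (simp add: rad_pow_0)
  ultimately obtain N where "J \<subseteq> rad_pow N" "\<not> J \<subseteq> rad_pow (Suc N)"
    using ex_least_nat_less[of "\<lambda>N. \<not> J \<subseteq> rad_pow N" m] by blast
  then show thesis using that dichotomy by blast
qed

lemma maximal_path_of_rad_pow_step:
  assumes J: "is_ideal V E s t J" "J \<subseteq> rad_pow N" "J \<inter> rad_pow (Suc N) \<subseteq> I"
    and g: "g \<in> J" "g r \<noteq> 0" "delta r \<notin> I"
  shows "r \<in> maximal_paths V E s t I"
proof -
  have "pmult t (delta (arrow_path s a)) (delta r) \<in> I \<and> pmult t (delta r) (delta (arrow_path s a)) \<in> I"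
    if "a \<in> E" for a
  proof -
    have a: "delta (arrow_path s a) \<in> rad_pow 1" "delta (arrow_path s a) \<in> pathalg V E s t"
      using delta_arrow_in_rad_pow_1[OF that] delta_in_pathalg[OF valid_arrow_path[OF quiver that]] .
    have "pmult t (delta (arrow_path s a)) g \<in> J \<inter> rad_pow (Suc N)"
      using is_idealD(5)[OF J(1) g(1) a(2)] pmult_rad_pow[OF a(1), of g N] J(2) g(1) by auto
    moreover have "pmult t g (delta (arrow_path s a)) \<in> J \<inter> rad_pow (Suc N)"
      using is_idealD(6)[OF J(1) g(1) a(2)] pmult_rad_pow[of g N, OF _ a(1)] J(2) g(1) by auto
    ultimately have "pmult t (delta (arrow_path s a)) g \<in> I" "pmult t g (delta (arrow_path s a)) \<in> I"
      using J(3) by blast+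
    then show ?thesis
      using pmult_delta_left_in_ideal[where g = g and r = r] pmult_delta_right_in_ideal[where g = g and r = r] g(2)
      by blast
  qed
  moreover have "valid_path V E s t r"
    using g(1,2) is_idealD(1)[OF J(1)] unfolding pathalg_def by blast
  ultimately show ?thesis
    unfolding maximal_paths_def using g(3) by blast
qed

lemma minimal_over_subset_socle_span:
  assumes "minimal_over V E s t I J"
  shows "J \<subseteq> socle_span"
proof
  obtain N where N: "J \<subseteq> rad_pow N" "J \<inter> rad_pow (Suc N) \<subseteq> I"
    using assms by (rule minimal_over_rad_pow_step)
  have J: "is_ideal V E s t J" using assms by (simp add: minimal_over_def)
  fix g assume g: "g \<in> J"
  then have g': "g \<in> path_span V E s t (\<lambda>_. True)"
    using is_idealD(1)[OF J] by (auto simp: path_span_True)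
  show "g \<in> socle_span"
    unfolding socle_span_def
    using path_spanD[OF g'] maximal_path_of_rad_pow_step[OF J N g] by (intro path_spanI) blast+
qed

theorem socle_preimage_eq_socle_span: "socle_preimage V E s t I = socle_span"
proof
  show "socle_preimage V E s t I \<subseteq> socle_span"
    unfolding socle_preimage_def
    using is_ideal_socle_span ideal_subset_socle_span minimal_over_subset_socle_span by blast
next
  show "socle_span \<subseteq> socle_preimage V E s t I"
    unfolding socle_preimage_def
  proof (rule Inter_greatest)
    fix K assume "K \<in> {K. is_ideal V E s t K \<and> I \<subseteq> K \<and> (\<forall>J. minimal_over V E s t I J \<longrightarrow> J \<subseteq> K)}"
    then have K: "is_ideal V E s t K" "I \<subseteq> K" and min: "\<And>J. minimal_over V E s t I J \<Longrightarrow> J \<subseteq> K"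
      by blast+
    show "socle_span \<subseteq> K"
      unfolding socle_span_def
    proof (rule path_span_subset_ideal[OF K(1)])
      fix p assume p: "valid_path V E s t p" "delta p \<in> I \<or> p \<in> maximal_paths V E s t I"
      show "delta p \<in> K"
      proof (cases "delta p \<in> I")
        case False
        then have "minimal_over V E s t I (path_span V E s t (\<lambda>r. delta r \<in> I \<or> r = p))"
          using p(2) minimal_over_maximal_path by blast
        then show ?thesis
          using min delta_in_path_span[OF p(1), of "\<lambda>r. delta r \<in> I \<or> r = p"] by blast
      qed (use K(2) in blast)
    qed
  qed
qed

end

lemma bounded_monomial_ideal_if_gentle:
  assumes "finite_connected_quiver V E s t" and "gentle V E s t R I"
  shows "bounded_monomial_ideal V E s t I"
proof -
  have q: "quiver V E s t" using assms(1) by (simp add: finite_connected_quiver_def)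
  have "I = gen_ideal V E s t R \<and> admissible V E s t I \<and> (\<forall>p\<in>R. valid_path V E s t p \<and> length (snd p) = 2)"
    using assms(2) unfolding gentle_def Let_def by (elim conjE) (intro conjI; assumption)
  then have gen: "I = gen_ideal V E s t R" and adm: "admissible V E s t I"
    and R: "\<And>p. p \<in> R \<Longrightarrow> valid_path V E s t p"
    by blast+
  have I: "is_ideal V E s t I" using adm by (simp add: admissible_def)
  show ?thesis
  proof
    show "delta p \<in> I" if "f \<in> I" "f p \<noteq> 0" for f p
      using gen_ideal_paths_monomial[OF q I gen R that] .
    show "\<exists>m. \<forall>p. valid_path V E s t p \<and> m \<le> length (snd p) \<longrightarrow> delta p \<in> I"
      using adm by (auto simp: admissible_def)
  qed (fact q I)+
qed

theorem lemma2p1: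
  fixes V :: "'v set" and E :: "'a set" and s t :: "'a \<Rightarrow> 'v"
    and R :: "('v, 'a) qpath set" and I :: "(('v, 'a) qpath \<Rightarrow> 'k::field) set"
  assumes "alg_closed TYPE('k)"
    and "finite_connected_quiver V E s t"
    and "gentle V E s t R I"
  shows "(\<forall>F c. F \<subseteq> maximal_paths V E s t I \<and> finite F \<and> (\<lambda>r. \<Sum>p\<in>F. c p * delta p r) \<in> I
            \<longrightarrow> (\<forall>p\<in>F. c p = 0))
       \<and> socle_preimage V E s t I =
           {(\<lambda>r. x r + (\<Sum>p\<in>F. c p * delta p r)) | x F c.
               x \<in> I \<and> F \<subseteq> maximal_paths V E s t I \<and> finite F}"
proof -
  interpret bounded_monomial_ideal V E s t I
    using assms(2,3) by (rule bounded_monomial_ideal_if_gentle)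
  have "\<forall>F c. F \<subseteq> maximal_paths V E s t I \<and> finite F \<and> (\<lambda>r. \<Sum>p\<in>F. c p * delta p r) \<in> I
      \<longrightarrow> (\<forall>p\<in>F. c p = 0)"
    by (intro allI impI ballI) (rule maximal_paths_independent; blast)
  then show ?thesis
    using socle_preimage_eq_socle_span socle_span_eq by simp
qed

end
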